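(* Let $0\to\mathfrak h\xrightarrow{i}\hat{\mathfrak g}\xrightarrow{p}\mathfrak g\to0$ be an abelian extension of a difference Lie algebra $(\mathfrak g,D)$ by $(\mathfrak h,K)$, with $\hat{\mathfrak g}$ carrying the difference operator $\hat D$, and identify $\mathfrak h$ with $i(\mathfrak h)\subset\hat{\mathfrak g}$. For a section $s$ (a linear map $s:\mathfrak g\to\hat{\mathfrak g}$ with $p\circ s=\mathrm{Id}$), define $\varrho:\mathfrak g\to\mathfrak{gl}(\mathfrak h)$ by $\varrho(x)u=[s(x),u]_{\hat{\mathfrak g}}$. Then $\varrho$ is a representation of $(\mathfrak g,D)$ on $\mathfrak h$ with respect to $K$, and it does not depend on the choice of section $s$.
   Context: A difference Lie algebra $(\mathfrak g,D)$: a Lie algebra with linear $D$ such that $D[x,y]=[x,D(y)]-[y,D(x)]+[D(x),D(y)]$; a homomorphism of difference Lie algebras is a Lie algebra homomorphism intertwining the operators. An extension of $(\mathfrak g,D)$ by a difference Lie algebra $(\mathfrak h,K)$ is a short exact sequence of Lie algebras $0\to\mathfrak h\xrightarrow{i}\hat{\mathfrak g}\xrightarrow{p}\mathfrak g\to0$ where $(\hat{\mathfrak g},\hat D)$ is a difference Lie algebra and $\hat D\circ i=i\circ K$, $p\circ\hat D=D\circ p$; it is abelian if $\mathfrak h$ is an abelian Lie algebra. A representation of $(\mathfrak g,D)$ on $V$ with respect to $K:V\to V$ is a Lie algebra representation $\varrho$ with $K(\varrho(x)u)=\varrho(D(x))u+\varrho(x)K(u)+\varrho(D(x))K(u)$.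 *)

theory Defs
  imports Complex_Main
begin

definition lie_algebra :: "('k::field \<Rightarrow> 'a \<Rightarrow> 'a::ab_group_add) \<Rightarrow> ('a \<Rightarrow> 'a \<Rightarrow> 'a) \<Rightarrow> bool" where
  "lie_algebra sc br \<longleftrightarrow>
     vector_space sc \<and>
     (\<forall>y. Vector_Spaces.linear sc sc (\<lambda>x. br x y)) \<and>
     (\<forall>x. Vector_Spaces.linear sc sc (\<lambda>y. br x y)) \<and>
     (\<forall>x. br x x = 0) \<and>
     (\<forall>x y z. br x (br y z) + br y (br z x) + br z (br x y) = 0)"

definition difference_lie_algebra ::
  "('k::field \<Rightarrow> 'a \<Rightarrow> 'a::ab_group_add) \<Rightarrow> ('a \<Rightarrow> 'a \<Rightarrow> 'a) \<Rightarrow> ('a \<Rightarrow> 'a) \<Rightarrow> bool" where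
  "difference_lie_algebra sc br D \<longleftrightarrow>
     lie_algebra sc br \<and> Vector_Spaces.linear sc sc D \<and>
     (\<forall>x y. D (br x y) = br x (D y) - br y (D x) + br (D x) (D y))"

definition lie_hom ::
  "('k::field \<Rightarrow> 'a \<Rightarrow> 'a::ab_group_add) \<Rightarrow> ('a \<Rightarrow> 'a \<Rightarrow> 'a) \<Rightarrow>
   ('k \<Rightarrow> 'b \<Rightarrow> 'b::ab_group_add) \<Rightarrow> ('b \<Rightarrow> 'b \<Rightarrow> 'b) \<Rightarrow> ('a \<Rightarrow> 'b) \<Rightarrow> bool" where
  "lie_hom sa bra sb brb f \<longleftrightarrow>
     Vector_Spaces.linear sa sb f \<and> (\<forall>x y. f (bra x y) = brb (f x) (f y))"

definition abelian_extension ::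
  "('k::field \<Rightarrow> 'g \<Rightarrow> 'g::ab_group_add) \<Rightarrow> ('g \<Rightarrow> 'g \<Rightarrow> 'g) \<Rightarrow> ('g \<Rightarrow> 'g) \<Rightarrow>
   ('k \<Rightarrow> 'h \<Rightarrow> 'h::ab_group_add) \<Rightarrow> ('h \<Rightarrow> 'h \<Rightarrow> 'h) \<Rightarrow> ('h \<Rightarrow> 'h) \<Rightarrow>
   ('k \<Rightarrow> 'e \<Rightarrow> 'e::ab_group_add) \<Rightarrow> ('e \<Rightarrow> 'e \<Rightarrow> 'e) \<Rightarrow> ('e \<Rightarrow> 'e) \<Rightarrow>
   ('h \<Rightarrow> 'e) \<Rightarrow> ('e \<Rightarrow> 'g) \<Rightarrow> bool" where
  "abelian_extension sg brg D sh brh K se bre hD i p \<longleftrightarrow>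
     difference_lie_algebra sg brg D \<and>
     difference_lie_algebra sh brh K \<and>
     difference_lie_algebra se bre hD \<and>
     lie_hom sh brh se bre i \<and> lie_hom se bre sg brg p \<and>
     inj i \<and> surj p \<and> range i = {x. p x = 0} \<and>
     (\<forall>u v. brh u v = 0) \<and>
     hD \<circ> i = i \<circ> K \<and> p \<circ> hD = D \<circ> p"

definition lie_representation ::
  "('k::field \<Rightarrow> 'g \<Rightarrow> 'g::ab_group_add) \<Rightarrow> ('g \<Rightarrow> 'g \<Rightarrow> 'g) \<Rightarrow>
   ('k \<Rightarrow> 'v \<Rightarrow> 'v::ab_group_add) \<Rightarrow> ('g \<Rightarrow> 'v \<Rightarrow> 'v) \<Rightarrow> bool" where
  "lie_representation sg brg sv \<rho> \<longleftrightarrow>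
     vector_space sv \<and>
     (\<forall>v. Vector_Spaces.linear sg sv (\<lambda>x. \<rho> x v)) \<and>
     (\<forall>x. Vector_Spaces.linear sv sv (\<rho> x)) \<and>
     (\<forall>x y v. \<rho> (brg x y) v = \<rho> x (\<rho> y v) - \<rho> y (\<rho> x v))"

definition difference_representation ::
  "('k::field \<Rightarrow> 'g \<Rightarrow> 'g::ab_group_add) \<Rightarrow> ('g \<Rightarrow> 'g \<Rightarrow> 'g) \<Rightarrow> ('g \<Rightarrow> 'g) \<Rightarrow>
   ('k \<Rightarrow> 'v \<Rightarrow> 'v::ab_group_add) \<Rightarrow> ('v \<Rightarrow> 'v) \<Rightarrow> ('g \<Rightarrow> 'v \<Rightarrow> 'v) \<Rightarrow> bool" where
  "difference_representation sg brg D sv K \<rho> \<longleftrightarrow>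
     lie_representation sg brg sv \<rho> \<and> Vector_Spaces.linear sv sv K \<and>
     (\<forall>x u. K (\<rho> x u) = \<rho> (D x) u + \<rho> x (K u) + \<rho> (D x) (K u))"

definition lin_section :: "('k::field \<Rightarrow> 'g \<Rightarrow> 'g::ab_group_add) \<Rightarrow> ('k \<Rightarrow> 'e \<Rightarrow> 'e::ab_group_add) \<Rightarrow>
   ('e \<Rightarrow> 'g) \<Rightarrow> ('g \<Rightarrow> 'e) \<Rightarrow> bool" where
  "lin_section sg se p s \<longleftrightarrow> Vector_Spaces.linear sg se s \<and> p \<circ> s = id"

text \<open>rho_s(x)u = [s(x), u] with h identified with i(h): the unique v with i v = [s x, i u].\<close>

definition induced_rep :: "('e \<Rightarrow> 'e \<Rightarrow> 'e) \<Rightarrow> ('h \<Rightarrow> 'e) \<Rightarrow> ('g \<Rightarrow> 'e) \<Rightarrow> 'g \<Rightarrow> 'h \<Rightarrow> 'h" where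
  "induced_rep bre i s x u = the_inv i (bre (s x) (i u))"

end

theory Submission
  imports Defs
begin

(* Since the kernel i(h) is an abelian ideal, the bracket [a, i u] depends only on p a. Hence rho
   does not depend on the section, and s x may be replaced by any lift of x: [s x, s y] for
   s [x, y] and hD (s x) for s (D x). The representation identity is then the Jacobi identity
   of the extension, and the compatibility with K is the difference identity of hD applied to
   [s x, i u]. *)

lemma lie_hom_module_hom: "lie_hom sa bra sb brb f \<Longrightarrow> module_hom sa sb f"
  unfolding lie_hom_def by (simp add: module_hom_iff_linear)

lemma lie_hom_bracket: "lie_hom sa bra sb brb f \<Longrightarrow> f (bra x y) = brb (f x) (f y)"
  unfolding lie_hom_def by blast

lemma lin_section_module_hom: "lin_section sg se p s \<Longrightarrow> module_hom sg se s"
  unfolding lin_section_def by (simp add: module_hom_iff_linear)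

lemma lin_section_apply: "lin_section sg se p s \<Longrightarrow> p (s x) = x"
  unfolding lin_section_def by (metis comp_apply id_apply)

locale lie_alg =
  fixes scale :: "'k::field \<Rightarrow> 'a \<Rightarrow> 'a::ab_group_add" and bracket :: "'a \<Rightarrow> 'a \<Rightarrow> 'a"
  assumes lie_algebra: "lie_algebra scale bracket"
begin

lemma vector_space: "vector_space scale"
  using lie_algebra unfolding lie_algebra_def by blast

lemma module_hom_left: "module_hom scale scale (\<lambda>x. bracket x y)"
  using lie_algebra unfolding lie_algebra_def by (simp add: module_hom_iff_linear)

lemma module_hom_right: "module_hom scale scale (bracket x)"
  using lie_algebra unfolding lie_algebra_def by (simp add: module_hom_iff_linear)

lemmas add_left = module_hom.add[OF module_hom_left]
  and scale_left = module_hom.scale[OF module_hom_left]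
  and diff_left = module_hom.diff[OF module_hom_left]
  and add_right = module_hom.add[OF module_hom_right]
  and scale_right = module_hom.scale[OF module_hom_right]
  and zero_right = module_hom.zero[OF module_hom_right]
  and neg_right = module_hom.neg[OF module_hom_right]

lemma alternating: "bracket a a = 0"
  using lie_algebra unfolding lie_algebra_def by blast

lemma anticommute: "bracket a b = - bracket b a"
proof -
  have "bracket a b + bracket b a = bracket (a + b) (a + b)"
    by (simp add: add_left add_right alternating[of a] alternating[of b])
  also have "\<dots> = 0"
    by (rule alternating)
  finally show ?thesis
    by (simp add: eq_neg_iff_add_eq_0)
qed

lemma jacobi_left: "bracket (bracket a b) c = bracket a (bracket b c) - bracket b (bracket a c)"
proof -
  have "bracket a (bracket b c) + bracket b (bracket c a) + bracket c (bracket a b) = 0"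
    using lie_algebra unfolding lie_algebra_def by blast
  then show ?thesis
    using anticommute[of c "bracket a b"] anticommute[of c a] by (simp add: neg_right algebra_simps)
qed

end

lemma difference_lie_algebra_bracket:
  assumes "difference_lie_algebra sc br D"
  shows "D (br a b) = br a (D b) + br (D a) b + br (D a) (D b)"
proof -
  interpret lie_alg sc br
    using assms unfolding difference_lie_algebra_def by unfold_locales blast
  show ?thesis
    using assms unfolding difference_lie_algebra_def by (simp add: anticommute[of b])
qed

locale abelian_lie_extension =
  fixes sg :: "'k::field \<Rightarrow> 'g \<Rightarrow> 'g::ab_group_add" and brg :: "'g \<Rightarrow> 'g \<Rightarrow> 'g" and D :: "'g \<Rightarrow> 'g"
    and sh :: "'k \<Rightarrow> 'h \<Rightarrow> 'h::ab_group_add" and brh :: "'h \<Rightarrow> 'h \<Rightarrow> 'h" and K :: "'h \<Rightarrow> 'h"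
    and se :: "'k \<Rightarrow> 'e \<Rightarrow> 'e::ab_group_add" and bre :: "'e \<Rightarrow> 'e \<Rightarrow> 'e" and hD :: "'e \<Rightarrow> 'e"
    and i :: "'h \<Rightarrow> 'e" and p :: "'e \<Rightarrow> 'g"
  assumes extension: "abelian_extension sg brg D sh brh K se bre hD i p"
begin

lemma
  g_difference: "difference_lie_algebra sg brg D" and
  h_difference: "difference_lie_algebra sh brh K" and
  e_difference: "difference_lie_algebra se bre hD" and
  i_hom: "lie_hom sh brh se bre i" and
  p_hom: "lie_hom se bre sg brg p" and
  inj_i: "inj i" and
  range_i: "range i = {x. p x = 0}" and
  h_abelian: "brh u v = 0" and
  hD_i: "hD (i u) = i (K u)" and
  p_hD: "p (hD a) = D (p a)"
  using extension unfolding abelian_extension_def by (auto simp: fun_eq_iff)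

sublocale g: lie_alg sg brg
  using g_difference unfolding difference_lie_algebra_def by unfold_locales blast

sublocale h: lie_alg sh brh
  using h_difference unfolding difference_lie_algebra_def by unfold_locales blast

sublocale e: lie_alg se bre
  using e_difference unfolding difference_lie_algebra_def by unfold_locales blast

sublocale i: module_hom sh se i
  using i_hom by (rule lie_hom_module_hom)

sublocale p: module_hom se sg p
  using p_hom by (rule lie_hom_module_hom)

lemma bracket_kernel_abelian: "bre (i u) (i v) = 0"
  using lie_hom_bracket[OF i_hom, of u v] by (simp add: h_abelian)

lemma p_i: "p (i u) = 0"
  using range_i by auto

lemma bracket_kernel_in_range: "bre a (i u) \<in> range i"
  using lie_hom_bracket[OF p_hom, of a "i u"] range_i by (simp add: p_i g.zero_right)

lemma bracket_kernel_cong: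
  assumes "p a = p b"
  shows "bre a (i u) = bre b (i u)"
proof -
  have "a - b \<in> range i"
    using assms range_i by (simp add: p.diff)
  then have "bre (a - b) (i u) = 0"
    using bracket_kernel_abelian by auto
  then show ?thesis
    by (simp add: e.diff_left)
qed

lemma induced_rep_eq: "i (induced_rep bre i s x u) = bre (s x) (i u)"
  unfolding induced_rep_def using bracket_kernel_in_range inj_i by (auto simp: f_the_inv_into_f)

lemma induced_rep_unique: "i v = bre (s x) (i u) \<Longrightarrow> induced_rep bre i s x u = v"
  using induced_rep_eq inj_i by (metis injD)

lemma induced_rep_section_independent:
  assumes "lin_section sg se p s" and "lin_section sg se p s'"
  shows "induced_rep bre i s' = induced_rep bre i s"
  unfolding induced_rep_def fun_eq_iff
  using bracket_kernel_cong lin_section_apply[OF assms(1)] lin_section_apply[OF assms(2)] by metis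

context
  fixes s :: "'g \<Rightarrow> 'e"
  assumes s_section: "lin_section sg se p s"
begin

interpretation s: module_hom sg se s
  using s_section by (rule lin_section_module_hom)

lemma lie_representation_induced_rep: "lie_representation sg brg sh (induced_rep bre i s)"
proof -
  let ?\<rho> = "induced_rep bre i s"
  have "Vector_Spaces.linear sg sh (\<lambda>x. ?\<rho> x v)" for v
    unfolding Vector_Spaces.linear_iff using g.vector_space h.vector_space
    by (auto intro!: induced_rep_unique
        simp: i.add i.scale induced_rep_eq s.add s.scale e.add_left e.scale_left)
  moreover have "Vector_Spaces.linear sh sh (?\<rho> x)" for x
    unfolding Vector_Spaces.linear_iff using h.vector_space
    by (auto intro!: induced_rep_unique simp: i.add i.scale induced_rep_eq e.add_right e.scale_right)
  moreover have "?\<rho> (brg x y) v = ?\<rho> x (?\<rho> y v) - ?\<rho> y (?\<rho> x v)" for x y v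
  proof (rule induced_rep_unique)
    have "bre (s (brg x y)) (i v) = bre (bre (s x) (s y)) (i v)"
      using s_section
      by (intro bracket_kernel_cong) (simp add: lie_hom_bracket[OF p_hom] lin_section_apply)
    then show "i (?\<rho> x (?\<rho> y v) - ?\<rho> y (?\<rho> x v)) = bre (s (brg x y)) (i v)"
      by (simp add: i.diff induced_rep_eq e.jacobi_left)
  qed
  ultimately show ?thesis
    unfolding lie_representation_def using h.vector_space by blast
qed

lemma induced_rep_difference:
  "K (induced_rep bre i s x u) =
     induced_rep bre i s (D x) u + induced_rep bre i s x (K u) + induced_rep bre i s (D x) (K u)"
proof (rule injD[OF inj_i])
  have hD_s: "bre (hD (s x)) (i w) = bre (s (D x)) (i w)" for w
    using s_section by (intro bracket_kernel_cong) (simp add: p_hD lin_section_apply)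
  have "i (K (induced_rep bre i s x u)) = hD (bre (s x) (i u))"
    by (simp add: induced_rep_eq flip: hD_i)
  also have "\<dots> = bre (s x) (i (K u)) + bre (s (D x)) (i u) + bre (s (D x)) (i (K u))"
    using difference_lie_algebra_bracket[OF e_difference] by (simp add: hD_i hD_s)
  finally show "i (K (induced_rep bre i s x u)) =
      i (induced_rep bre i s (D x) u + induced_rep bre i s x (K u) + induced_rep bre i s (D x) (K u))"
    by (simp add: i.add induced_rep_eq algebra_simps)
qed

lemma difference_representation_induced_rep:
  "difference_representation sg brg D sh K (induced_rep bre i s)"
  unfolding difference_representation_def
  using lie_representation_induced_rep induced_rep_difference h_difference
  unfolding difference_lie_algebra_def by blast

end

end

theorem proposition4p14:
  fixes sg :: "'k::field \<Rightarrow> 'g \<Rightarrow> 'g::ab_group_add" and brg :: "'g \<Rightarrow> 'g \<Rightarrow> 'g" and D :: "'g \<Rightarrow> 'g"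
    and sh :: "'k \<Rightarrow> 'h \<Rightarrow> 'h::ab_group_add" and brh :: "'h \<Rightarrow> 'h \<Rightarrow> 'h" and K :: "'h \<Rightarrow> 'h"
    and se :: "'k \<Rightarrow> 'e \<Rightarrow> 'e::ab_group_add" and bre :: "'e \<Rightarrow> 'e \<Rightarrow> 'e" and hD :: "'e \<Rightarrow> 'e"
    and i :: "'h \<Rightarrow> 'e" and p :: "'e \<Rightarrow> 'g" and s :: "'g \<Rightarrow> 'e"
  assumes "abelian_extension sg brg D sh brh K se bre hD i p"
    and "lin_section sg se p s"
  shows "(\<forall>x u. bre (s x) (i u) \<in> range i)
    \<and> difference_representation sg brg D sh K (induced_rep bre i s)
    \<and> (\<forall>s'. lin_section sg se p s' \<longrightarrow> induced_rep bre i s' = induced_rep bre i s)"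
proof -
  interpret abelian_lie_extension sg brg D sh brh K se bre hD i p
    using assms(1) by unfold_locales
  show ?thesis
    using bracket_kernel_in_range difference_representation_induced_rep[OF assms(2)]
      induced_rep_section_independent[OF assms(2)] by blast
qed

end
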